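(* Let $q\ge 3$ and $\beta=0$. Let $\Omega=(G,\Lambda,\sigma)$ with $G=(V,E)$ be a feasible instance of the Potts model, let $v\in V\setminus\Lambda$, $B=B_\Omega(v)$, and let $\pi\in[q]^{B}$ be locally feasible. Then $\pi$ is feasible, i.e., there exists $\rho\in[q]^V$ with $w_\Omega(\rho)>0$ agreeing with $\pi$ on $B$.
   Context: Potts model: fix an integer $q\ge2$ and a real $\beta\ge0$; $[q]=\{1,\dots,q\}$, $0^0=1$. For a finite graph $G=(V,E)$ an instance is $\Omega=(G,\Lambda,\sigma)$, $\Lambda\subseteq V$, $\sigma\in[q]^\Lambda$; $w_\Omega(\pi)=\beta^{|\{uv\in E:\pi(u)=\pi(v)\}|}$ if $\pi\in[q]^V$ agrees with $\sigma$ on $\Lambda$, else $0$; $\Omega$ is feasible if some $\pi$ has $w_\Omega(\pi)>0$. For $S\subseteq V$ and $\rho\in[q]^S$, $w_{G[S]}(\rho)=\beta^{|\{uv\in E: u,v\in S,\rho(u)=\rho(v)\}|}$. For $S\subseteq V\setminus\Lambda$, $\pi\in[q]^S$ is locally feasible if $w_{G[\Lambda\cup S]}(\sigma\cup\pi)>0$, where $\sigma\cup\pi$ is the configuration on $\Lambda\cup S$ agreeing with $\sigma$ and $\pi$. A vertex is low-degree if $\deg_G(v)<\frac{q-1}{1-\beta}-2$ (for $\beta=0$: $\deg_G(v)<q-3$). $\partial B=\{u\in V\setminus B:\exists w\in B,uw\in E\}$. $B\subseteq V\setminus\Lambda$ is a permissive block in $\Omega$ if every $u\in\partial B\setminus\Lambda$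 is low-degree; $B_\Omega(S)$ is the minimal permissive block containing $S$. *)

theory Defs
  imports Complex_Main
begin

definition simple_graph :: "'a set \<Rightarrow> 'a set set \<Rightarrow> bool" where
  "simple_graph V E \<longleftrightarrow> finite V \<and>
     (\<forall>e\<in>E. \<exists>u v. u \<noteq> v \<and> u \<in> V \<and> v \<in> V \<and> e = {u, v})"

text \<open>rho is a configuration in [q]^S (only its values on S matter).\<close>
definition config :: "nat \<Rightarrow> 'a set \<Rightarrow> ('a \<Rightarrow> nat) \<Rightarrow> bool" where
  "config q S \<rho> \<longleftrightarrow> (\<forall>x\<in>S. \<rho> x \<in> {1..q})"

definition mono_edges :: "'a set set \<Rightarrow> 'a set \<Rightarrow> ('a \<Rightarrow> nat) \<Rightarrow> 'a set set" where
  "mono_edges E S \<rho> = {e \<in> E. e \<subseteq> S \<and> (\<forall>u\<in>e. \<forall>v\<in>e. \<rho> u = \<rho> v)}"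

text \<open>w_{G[S]}(rho) = beta ^ (#monochromatic edges in G[S]); note 0^0 = 1.\<close>
definition w_induced :: "real \<Rightarrow> 'a set set \<Rightarrow> 'a set \<Rightarrow> ('a \<Rightarrow> nat) \<Rightarrow> real" where
  "w_induced \<beta> E S \<rho> = \<beta> ^ card (mono_edges E S \<rho>)"

definition w_inst :: "real \<Rightarrow> nat \<Rightarrow> 'a set \<Rightarrow> 'a set set \<Rightarrow> 'a set \<Rightarrow> ('a \<Rightarrow> nat)
    \<Rightarrow> ('a \<Rightarrow> nat) \<Rightarrow> real" where
  "w_inst \<beta> q V E \<Lambda> \<sigma> \<pi> =
     (if config q V \<pi> \<and> (\<forall>x\<in>\<Lambda>. \<pi> x = \<sigma> x) then \<beta> ^ card (mono_edges E V \<pi>) else 0)"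

definition feasible_inst :: "real \<Rightarrow> nat \<Rightarrow> 'a set \<Rightarrow> 'a set set \<Rightarrow> 'a set \<Rightarrow> ('a \<Rightarrow> nat) \<Rightarrow> bool" where
  "feasible_inst \<beta> q V E \<Lambda> \<sigma> \<longleftrightarrow> (\<exists>\<pi>. w_inst \<beta> q V E \<Lambda> \<sigma> \<pi> > 0)"

definition glue :: "'a set \<Rightarrow> ('a \<Rightarrow> nat) \<Rightarrow> ('a \<Rightarrow> nat) \<Rightarrow> 'a \<Rightarrow> nat" where
  "glue \<Lambda> \<sigma> \<pi> = (\<lambda>x. if x \<in> \<Lambda> then \<sigma> x else \<pi> x)"

definition locally_feasible :: "real \<Rightarrow> 'a set set \<Rightarrow> 'a set \<Rightarrow> ('a \<Rightarrow> nat) \<Rightarrow> 'a set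
    \<Rightarrow> ('a \<Rightarrow> nat) \<Rightarrow> bool" where
  "locally_feasible \<beta> E \<Lambda> \<sigma> S \<pi> \<longleftrightarrow> w_induced \<beta> E (\<Lambda> \<union> S) (glue \<Lambda> \<sigma> \<pi>) > 0"

definition degree :: "'a set set \<Rightarrow> 'a \<Rightarrow> nat" where
  "degree E v = card {e \<in> E. v \<in> e}"

definition low_degree :: "real \<Rightarrow> nat \<Rightarrow> 'a set set \<Rightarrow> 'a \<Rightarrow> bool" where
  "low_degree \<beta> q E v \<longleftrightarrow> real (degree E v) < (real q - 1) / (1 - \<beta>) - 2"

definition boundary :: "'a set \<Rightarrow> 'a set set \<Rightarrow> 'a set \<Rightarrow> 'a set" where
  "boundary V E B = {u \<in> V - B. \<exists>w\<in>B. {u, w} \<in> E}"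

definition permissive :: "real \<Rightarrow> nat \<Rightarrow> 'a set \<Rightarrow> 'a set set \<Rightarrow> 'a set \<Rightarrow> 'a set \<Rightarrow> bool" where
  "permissive \<beta> q V E \<Lambda> B \<longleftrightarrow> B \<subseteq> V - \<Lambda> \<and>
     (\<forall>u \<in> boundary V E B - \<Lambda>. low_degree \<beta> q E u)"

text \<open>Minimal permissive block containing S (permissive blocks are closed under
  intersection, so this is the intersection of all of them containing S).\<close>
definition block :: "real \<Rightarrow> nat \<Rightarrow> 'a set \<Rightarrow> 'a set set \<Rightarrow> 'a set \<Rightarrow> 'a set \<Rightarrow> 'a set" where
  "block \<beta> q V E \<Lambda> S = \<Inter> {B. permissive \<beta> q V E \<Lambda> B \<and> S \<subseteq> B}"

end

theory Submission
  imports Defs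
begin

text \<open>For \<open>\<beta> = 0\<close> a configuration has positive weight iff it creates no monochromatic edge.
  Take any feasible \<open>\<tau>\<close> and combine it with \<open>\<sigma>\<close> on \<open>\<Lambda>\<close> and \<open>\<pi>\<close> on \<open>B\<close>. An edge that
  stays inside \<open>\<Lambda> \<union> B\<close> is bichromatic by local feasibility, one that misses \<open>B\<close> by the
  feasibility of \<open>\<tau>\<close>; so every monochromatic edge meets the free boundary \<open>\<partial>B - \<Lambda>\<close>.
  Its vertices have fewer than \<open>q - 3\<close> neighbours, so recolouring them one after another
  with a colour unused in their neighbourhood removes all monochromatic edges.\<close>

definition bichromatic :: "('a \<Rightarrow> nat) \<Rightarrow> 'a set \<Rightarrow> bool" where
  "bichromatic \<rho> e \<longleftrightarrow> (\<exists>a\<in>e. \<exists>b\<in>e. \<rho> a \<noteq> \<rho> b)"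

lemma simple_graph_finite_edges:
  assumes "simple_graph V E"
  shows "finite E"
proof -
  have "E \<subseteq> Pow V" using assms unfolding simple_graph_def by auto
  moreover have "finite V" using assms unfolding simple_graph_def by simp
  ultimately show ?thesis by (simp add: finite_subset)
qed

lemma simple_graph_edge_through:
  assumes "simple_graph V E" "e \<in> E" "u \<in> e"
  obtains w where "w \<noteq> u" "e = {u, w}"
  using assms unfolding simple_graph_def by (metis insert_commute insertE singletonD)

lemma mono_edges_eq_empty_iff:
  "mono_edges E S \<rho> = {} \<longleftrightarrow> (\<forall>e\<in>E. e \<subseteq> S \<longrightarrow> bichromatic \<rho> e)"
  unfolding mono_edges_def bichromatic_def by blast

lemma zero_power_card_pos_iff:
  assumes "finite A"
  shows "(0::real) ^ card A > 0 \<longleftrightarrow> A = {}"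
  using assms by (cases "card A") auto

lemma w_inst_zero_pos_iff:
  assumes "finite E"
  shows "w_inst 0 q V E \<Lambda> \<sigma> \<rho> > 0 \<longleftrightarrow>
    config q V \<rho> \<and> (\<forall>x\<in>\<Lambda>. \<rho> x = \<sigma> x) \<and> (\<forall>e\<in>E. e \<subseteq> V \<longrightarrow> bichromatic \<rho> e)"
proof -
  have "finite (mono_edges E V \<rho>)" using assms unfolding mono_edges_def by simp
  then show ?thesis
    unfolding w_inst_def by (simp add: zero_power_card_pos_iff mono_edges_eq_empty_iff)
qed

lemma locally_feasible_zero_iff:
  assumes "finite E"
  shows "locally_feasible 0 E \<Lambda> \<sigma> S \<pi> \<longleftrightarrow>
    (\<forall>e\<in>E. e \<subseteq> \<Lambda> \<union> S \<longrightarrow> bichromatic (glue \<Lambda> \<sigma> \<pi>) e)"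
proof -
  have "finite (mono_edges E (\<Lambda> \<union> S) (glue \<Lambda> \<sigma> \<pi>))" using assms unfolding mono_edges_def by simp
  then show ?thesis
    unfolding locally_feasible_def w_induced_def
    by (simp add: zero_power_card_pos_iff mono_edges_eq_empty_iff)
qed

lemma low_degree_zero_less:
  assumes "low_degree 0 q E u"
  shows "degree E u < q"
  using assms unfolding low_degree_def by simp

lemma block_subset:
  assumes "S \<subseteq> V - \<Lambda>"
  shows "block \<beta> q V E \<Lambda> S \<subseteq> V - \<Lambda>"
proof -
  have "permissive \<beta> q V E \<Lambda> (V - \<Lambda>)" unfolding permissive_def boundary_def by auto
  then show ?thesis using assms unfolding block_def by blast
qed

lemma low_degree_boundary_block:
  assumes "u \<in> boundary V E (block \<beta> q V E \<Lambda> S) - \<Lambda>"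
  shows "low_degree \<beta> q E u"
proof -
  obtain w where w: "u \<in> V" "w \<in> block \<beta> q V E \<Lambda> S" "{u, w} \<in> E"
    and u: "u \<notin> block \<beta> q V E \<Lambda> S" "u \<notin> \<Lambda>"
    using assms unfolding boundary_def by auto
  then obtain B where B: "permissive \<beta> q V E \<Lambda> B" "S \<subseteq> B" "u \<notin> B"
    unfolding block_def by blast
  then have "w \<in> B" using w(2) unfolding block_def by blast
  then have "u \<in> boundary V E B - \<Lambda>" using w u B unfolding boundary_def by auto
  then show ?thesis using B(1) unfolding permissive_def by blast
qed

lemma free_colour:
  assumes "finite E" "degree E u < q"
  shows "\<exists>c\<in>{1..q}. \<forall>w. {u, w} \<in> E \<longrightarrow> \<rho> w \<noteq> c"
proof -
  let ?N = "{w. {u, w} \<in> E}"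
  have inj: "inj_on (\<lambda>w. {u, w}) ?N" by (auto simp: inj_on_def doubleton_eq_iff)
  have sub: "(\<lambda>w. {u, w}) ` ?N \<subseteq> {e\<in>E. u \<in> e}" by auto
  have fin: "finite {e\<in>E. u \<in> e}" using assms(1) by auto
  have finN: "finite ?N" using finite_imageD[OF finite_subset[OF sub fin] inj] .
  have "card (\<rho> ` ?N) \<le> card ?N" using finN by (rule card_image_le)
  also have "\<dots> = card ((\<lambda>w. {u, w}) ` ?N)" using inj by (simp add: card_image)
  also have "\<dots> \<le> degree E u" unfolding degree_def using card_mono[OF fin sub] .
  finally have "card (\<rho> ` ?N) < card {1..q}" using assms(2) by simp
  then have "\<not> {1..q} \<subseteq> \<rho> ` ?N"
    using card_mono[OF finite_imageI[OF finN]] by fastforce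
  then show ?thesis by (auto simp: subset_eq image_iff) (metis atLeastAtMost_iff)
qed

lemma recolour_vertex:
  assumes "simple_graph V E" "degree E u < q" "config q V \<rho>"
  obtains c where "config q V (\<rho>(u := c))" "\<forall>e\<in>E. u \<in> e \<longrightarrow> bichromatic (\<rho>(u := c)) e"
proof -
  obtain c where c: "c \<in> {1..q}" "\<forall>w. {u, w} \<in> E \<longrightarrow> \<rho> w \<noteq> c"
    using free_colour[OF simple_graph_finite_edges[OF assms(1)] assms(2)] by blast
  have "bichromatic (\<rho>(u := c)) e" if e: "e \<in> E" "u \<in> e" for e
  proof -
    obtain w where "w \<noteq> u" "e = {u, w}"
      using simple_graph_edge_through[OF assms(1) e] .
    then show ?thesis using c(2) e(1) unfolding bichromatic_def by force
  qed
  moreover have "config q V (\<rho>(u := c))" using assms(3) c(1) unfolding config_def by simp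
  ultimately show ?thesis using that by blast
qed

lemma greedy_recolouring:
  assumes "simple_graph V E" "U \<subseteq> V" "\<forall>u\<in>U. degree E u < q" "config q V \<rho>\<^sub>0"
    "\<forall>e\<in>E. e \<inter> U = {} \<longrightarrow> bichromatic \<rho>\<^sub>0 e"
  shows "\<exists>\<rho>. config q V \<rho> \<and> (\<forall>x. x \<notin> U \<longrightarrow> \<rho> x = \<rho>\<^sub>0 x) \<and> (\<forall>e\<in>E. bichromatic \<rho> e)"
proof -
  have "finite U" using assms(1,2) finite_subset unfolding simple_graph_def by blast
  then show ?thesis using assms(3-5)
  proof (induction U arbitrary: \<rho>\<^sub>0 rule: finite_induct)
    case empty
    then show ?case by auto
  next
    case (insert u U)
    obtain c where c: "config q V (\<rho>\<^sub>0(u := c))"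
      "\<forall>e\<in>E. u \<in> e \<longrightarrow> bichromatic (\<rho>\<^sub>0(u := c)) e"
      using recolour_vertex[OF assms(1)] insert.prems(1,2) by blast
    have "\<forall>e\<in>E. e \<inter> U = {} \<longrightarrow> bichromatic (\<rho>\<^sub>0(u := c)) e"
    proof (intro ballI impI)
      fix e assume e: "e \<in> E" "e \<inter> U = {}"
      show "bichromatic (\<rho>\<^sub>0(u := c)) e"
      proof (cases "u \<in> e")
        case False
        then have "bichromatic \<rho>\<^sub>0 e" using e insert.prems(3) by blast
        then show ?thesis using False unfolding bichromatic_def by (metis fun_upd_other)
      qed (use c(2) e in blast)
    qed
    then obtain \<rho> where "config q V \<rho>" "\<forall>x. x \<notin> U \<longrightarrow> \<rho> x = (\<rho>\<^sub>0(u := c)) x"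
      "\<forall>e\<in>E. bichromatic \<rho> e"
      using insert.IH[OF _ c(1)] insert.prems(1) by blast
    then show ?case by auto
  qed
qed

lemma edge_off_free_boundary:
  assumes "simple_graph V E" "e \<in> E" "e \<inter> (boundary V E B - \<Lambda>) = {}" "\<not> e \<subseteq> \<Lambda> \<union> B"
  shows "e \<inter> B = {}"
proof (rule ccontr)
  assume "e \<inter> B \<noteq> {}"
  then obtain w where w: "w \<in> e" "w \<in> B" by blast
  obtain u where u: "u \<in> e" "u \<notin> \<Lambda> \<union> B" using assms(4) by blast
  obtain x where "e = {u, x}" using simple_graph_edge_through[OF assms(1,2) u(1)] by blast
  then have "{u, w} \<in> E" using w u assms(2) by auto
  moreover have "u \<in> V" using assms(1,2) u(1) unfolding simple_graph_def by auto
  ultimately have "u \<in> boundary V E B - \<Lambda>" using w(2) u(2) unfolding boundary_def by auto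
  then show False using assms(3) u(1) by blast
qed

lemma extension_bichromatic_off_free_boundary:
  assumes "simple_graph V E" "B \<inter> \<Lambda> = {}"
    and \<tau>: "\<forall>x\<in>\<Lambda>. \<tau> x = \<sigma> x" "\<forall>e\<in>E. bichromatic \<tau> e"
    and \<pi>: "\<forall>e\<in>E. e \<subseteq> \<Lambda> \<union> B \<longrightarrow> bichromatic (glue \<Lambda> \<sigma> \<pi>) e"
    and e: "e \<in> E" "e \<inter> (boundary V E B - \<Lambda>) = {}"
  shows "bichromatic (\<lambda>x. if x \<in> \<Lambda> \<union> B then glue \<Lambda> \<sigma> \<pi> x else \<tau> x) e"
    (is "bichromatic ?\<rho> e")
proof (cases "e \<subseteq> \<Lambda> \<union> B")
  case True
  then show ?thesis using \<pi> e(1) unfolding bichromatic_def by (metis subsetD)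
next
  case False
  then have "e \<inter> B = {}" using edge_off_free_boundary[OF assms(1) e] by blast
  then have "\<forall>x\<in>e. ?\<rho> x = \<tau> x" using \<tau>(1) unfolding glue_def by auto
  then show ?thesis using \<tau>(2) e(1) unfolding bichromatic_def by metis
qed

theorem mainTheorem5:
  fixes V :: "'a set" and E :: "'a set set" and \<Lambda> :: "'a set"
    and \<sigma> \<pi> :: "'a \<Rightarrow> nat" and q :: nat and \<beta> :: real and v :: 'a and B :: "'a set"
  assumes "q \<ge> 3" and "\<beta> = 0"
    and "simple_graph V E" and "\<Lambda> \<subseteq> V" and "config q \<Lambda> \<sigma>"
    and "feasible_inst \<beta> q V E \<Lambda> \<sigma>"
    and "v \<in> V - \<Lambda>"
    and "B = block \<beta> q V E \<Lambda> {v}"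
    and "config q B \<pi>"
    and "locally_feasible \<beta> E \<Lambda> \<sigma> B \<pi>"
  shows "\<exists>\<rho>. w_inst \<beta> q V E \<Lambda> \<sigma> \<rho> > 0 \<and> (\<forall>x\<in>B. \<rho> x = \<pi> x)"
proof -
  have finE: "finite E" using assms(3) by (rule simple_graph_finite_edges)
  have edges_in_V: "\<forall>e\<in>E. e \<subseteq> V" using assms(3) unfolding simple_graph_def by auto
  have BV: "B \<subseteq> V - \<Lambda>" using block_subset[of "{v}" V \<Lambda>] assms(7,8) by simp
  obtain \<tau> where \<tau>: "config q V \<tau>" "\<forall>x\<in>\<Lambda>. \<tau> x = \<sigma> x" "\<forall>e\<in>E. bichromatic \<tau> e"
    using assms(6) edges_in_V unfolding assms(2) feasible_inst_def w_inst_zero_pos_iff[OF finE] by auto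
  have \<pi>: "\<forall>e\<in>E. e \<subseteq> \<Lambda> \<union> B \<longrightarrow> bichromatic (glue \<Lambda> \<sigma> \<pi>) e"
    using assms(10) unfolding assms(2) locally_feasible_zero_iff[OF finE] .
  define \<rho>\<^sub>0 where "\<rho>\<^sub>0 = (\<lambda>x. if x \<in> \<Lambda> \<union> B then glue \<Lambda> \<sigma> \<pi> x else \<tau> x)"
  define U where "U = boundary V E B - \<Lambda>"
  have "config q V \<rho>\<^sub>0" using assms(5,9) \<tau>(1) unfolding config_def \<rho>\<^sub>0_def glue_def by auto
  moreover have "degree E u < q" if "u \<in> U" for u
    using that low_degree_boundary_block[of u V E \<beta> q \<Lambda> "{v}"] low_degree_zero_less assms(2,8)
    unfolding U_def by simp
  moreover have "bichromatic \<rho>\<^sub>0 e" if "e \<in> E" "e \<inter> U = {}" for e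
    using extension_bichromatic_off_free_boundary[OF assms(3) _ \<tau>(2,3) \<pi> that[unfolded U_def]] BV
    unfolding \<rho>\<^sub>0_def by blast
  moreover have "U \<subseteq> V" unfolding U_def boundary_def by blast
  ultimately obtain \<rho> where \<rho>: "config q V \<rho>" "\<forall>x. x \<notin> U \<longrightarrow> \<rho> x = \<rho>\<^sub>0 x"
    "\<forall>e\<in>E. bichromatic \<rho> e"
    using greedy_recolouring[OF assms(3), of U q \<rho>\<^sub>0] by blast
  have "\<forall>x\<in>\<Lambda> \<union> B. \<rho> x = glue \<Lambda> \<sigma> \<pi> x" using \<rho>(2) unfolding U_def boundary_def \<rho>\<^sub>0_def by auto
  then have "(\<forall>x\<in>\<Lambda>. \<rho> x = \<sigma> x) \<and> (\<forall>x\<in>B. \<rho> x = \<pi> x)" using BV unfolding glue_def by auto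
  then show ?thesis using \<rho>(1,3) assms(2) by (auto simp: w_inst_zero_pos_iff[OF finE])
qed

end
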